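(* Let $S$ be a simple $(l,r)$-framed algebra, $D_S=\{d:\bigoplus_cS_{(d,c)}\ne0\}$, and for $d\in\mathbb{Z}_2^{l+r}$ let $A_S(d)=\bigoplus_{c}S_{(d,c)}$. Let $d\in D_S$ and let $N\subset A_S(d)$ be an $\mathrm{IS}^{(l,r)}$-graded subspace with $a\cdot n\in N$ for all $a\in A_S(0)$, $n\in N$. Then $N=0$ or $N=A_S(d)$.
   Context: Let $\mathrm{IS}=\{0,\frac12,\frac1{16}\}$ with fusion rule $\star$ (values are subsets): $0\star h=h\star0=\{h\}$, $\frac12\star\frac12=\{0\}$, $\frac12\star\frac1{16}=\frac1{16}\star\frac12=\{\frac1{16}\}$, $\frac1{16}\star\frac1{16}=\{0,\frac12\}$; $A(h_0,h_1,h_2,h_3)=\{h: h\in h_2\star h_3,\ h_0\in h_1\star h\}$. For $h\in A(h_0,h_1,h_2,h_3)$, $h'\in A(h_0,h_2,h_1,h_3)$ define $B^{h,h'}_{h_0,h_1,h_2,h_3}$: $B_{*,0,*,*}=B_{*,*,0,*}=1$; $B_{*,\frac12,\frac12,*}=-1$; $B_{a,\frac12,\frac1{16},a'}=B_{a,\frac1{16},\frac12,a'}=i$ if $a$ or $a'$ is $\frac12$, else $-i$; $B^{b,b'}_{a,\frac1{16},\frac1{16},a'}=e^{-\pi i/8}\cdot\{1$ if $a,a'\ne\frac1{16},a=a'$; $i$ if $a,a'\neq\frac1{16},a\ne a'$; $\frac{1+i}2$ if $a=a'=\frac1{16},b=b'$; $\frac{1-i}2$ if $a=a'=\frac1{16},b\neq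 b'\}$. $\mathrm{IS}^{(l,r)}=\mathrm{IS}^l\times\mathrm{IS}^r$, $\lambda=(h_1,..,h_l,\bar h_1,..,\bar h_r)$, $s(\lambda)=\sum h_i-\sum\bar h_j$; $\star$, $A$ componentwise; $B^{\lambda,\lambda'}_{\lambda^0,\dots,\lambda^3}=\prod_{i\le l}B^{h_i,h'_i}_{h^0_i,\dots,h^3_i}\prod_{j\le r}\overline{B^{\bar h_j,\bar h'_j}_{\bar h^0_j,\dots,\bar h^3_j}}$. An $(l,r)$-framed algebra: finite-dimensional $\mathrm{IS}^{(l,r)}$-graded $S=\bigoplus S_\lambda$ over $\mathbb{C}$ with bilinear product, nonzero $1\in S_0$, $a\cdot_\lambda b$ the $S_\lambda$-component of $a\cdot b$, satisfying (FA1) $S_\lambda=0$ unless $s(\lambda)\in\mathbb{Z}$; (FA2) $S_0=\mathbb{C}1$, $1$ a two-sided unit; (FA3) $S_{\lambda^1}\cdot S_{\lambda^2}\subset\bigoplus_{\lambda\in\lambda^1\star\lambda^2}S_\lambda$; (FA4) $a_2\cdot_{\lambda^0}(a_1\cdot_{\lambda'}a_3)=\sum_{\lambda\in A(\lambda^0,\lambda^1,\lambda^2,\lambda^3)}B^{\lambda,\lambda'}_{\lambda^0,\lambda^1,\lambda^2,\lambda^3}a_1\cdot_{\lambda^0}(a_2\cdot_\lambda a_3)$ for $a_i\in S_{\lambda^i}$, $\lambda'\in A(\lambda^0,\lambda^2,\lambda^1,\lambda^3)$. Ideal: graded subspace $M$ with $S\cdot M\subset M$; simple: only ideals $0$ and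 $S$. Identify $\mathrm{IS}$ with $\{(d,c)\in\mathbb{Z}_2^2:dc=0\}$ via $0\leftrightarrow(0,0)$, $\frac12\leftrightarrow(0,1)$, $\frac1{16}\leftrightarrow(1,0)$, and componentwise $\mathrm{IS}^{(l,r)}$ with pairs $(d,c)\in(\mathbb{Z}_2^{l+r})^2$, $dc=0$; $S_{(d,c)}$ is the corresponding graded piece. *)

theory Defs
  imports Complex_Main
begin

datatype IS = IS0 | IShalf | ISsixteenth

definition weight :: "IS \<Rightarrow> rat" where
  "weight h = (case h of IS0 \<Rightarrow> 0 | IShalf \<Rightarrow> 1/2 | ISsixteenth \<Rightarrow> 1/16)"

fun fus :: "IS \<Rightarrow> IS \<Rightarrow> IS set" where
  "fus IS0 h = {h}"
| "fus h IS0 = {h}"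
| "fus IShalf IShalf = {IS0}"
| "fus IShalf ISsixteenth = {ISsixteenth}"
| "fus ISsixteenth IShalf = {ISsixteenth}"
| "fus ISsixteenth ISsixteenth = {IS0, IShalf}"

definition Aset :: "IS \<Rightarrow> IS \<Rightarrow> IS \<Rightarrow> IS \<Rightarrow> IS set" where
  "Aset h0 h1 h2 h3 = {h. h \<in> fus h2 h3 \<and> h0 \<in> fus h1 h}"

text \<open>Bmat b b' h0 h1 h2 h3 is the coefficient B^{b,b'}_{h0,h1,h2,h3}.
  Outside the cases listed in the paper (which are irrelevant since then A is empty) it is 0.\<close>
definition Bmat :: "IS \<Rightarrow> IS \<Rightarrow> IS \<Rightarrow> IS \<Rightarrow> IS \<Rightarrow> IS \<Rightarrow> complex" where
  "Bmat b b' a h1 h2 a' =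
    (if h1 = IS0 \<or> h2 = IS0 then 1
     else if h1 = IShalf \<and> h2 = IShalf then -1
     else if (h1 = IShalf \<and> h2 = ISsixteenth) \<or> (h1 = ISsixteenth \<and> h2 = IShalf)
       then (if a = IShalf \<or> a' = IShalf then \<i> else - \<i>)
     else exp (- (complex_of_real pi * \<i> / 8)) *
       (if a \<noteq> ISsixteenth \<and> a' \<noteq> ISsixteenth then (if a = a' then 1 else \<i>)
        else if a = ISsixteenth \<and> a' = ISsixteenth then
          (if b = b' then (1 + \<i>) / 2 else (1 - \<i>) / 2)
        else 0))"

section \<open>Componentwise data on IS^(l,r), represented as lists of length l+r
  (first l entries holomorphic, last r antiholomorphic)\<close>

definition grades :: "nat \<Rightarrow> nat \<Rightarrow> IS list set" where
  "grades l r = {lam. length lam = l + r}"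

definition zero_grade :: "nat \<Rightarrow> nat \<Rightarrow> IS list" where
  "zero_grade l r = replicate (l + r) IS0"

definition sgrade :: "nat \<Rightarrow> nat \<Rightarrow> IS list \<Rightarrow> rat" where
  "sgrade l r lam = (\<Sum>i<l. weight (lam ! i)) - (\<Sum>j\<in>{l..<l+r}. weight (lam ! j))"

definition fusL :: "IS list \<Rightarrow> IS list \<Rightarrow> IS list set" where
  "fusL x y = {z. length z = length x \<and> length y = length x \<and>
                  (\<forall>i<length x. z ! i \<in> fus (x ! i) (y ! i))}"

definition AsetL :: "IS list \<Rightarrow> IS list \<Rightarrow> IS list \<Rightarrow> IS list \<Rightarrow> IS list set" where
  "AsetL x0 x1 x2 x3 = {z. length z = length x0 \<and> length x1 = length x0 \<and>
        length x2 = length x0 \<and> length x3 = length x0 \<and>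
        (\<forall>i<length x0. z ! i \<in> Aset (x0 ! i) (x1 ! i) (x2 ! i) (x3 ! i))}"

definition BmatL :: "nat \<Rightarrow> nat \<Rightarrow> IS list \<Rightarrow> IS list \<Rightarrow> IS list \<Rightarrow> IS list \<Rightarrow> IS list \<Rightarrow> IS list \<Rightarrow> complex" where
  "BmatL l r z z' x0 x1 x2 x3 =
     (\<Prod>i<l. Bmat (z ! i) (z' ! i) (x0 ! i) (x1 ! i) (x2 ! i) (x3 ! i)) *
     (\<Prod>j\<in>{l..<l+r}. cnj (Bmat (z ! j) (z' ! j) (x0 ! j) (x1 ! j) (x2 ! j) (x3 ! j)))"

text \<open>The algebra S is the complex vector space 'v (scalar multiplication sc).
  Its grading S = (+)_lam S_lam is given by the family of projections proj lam onto the
  graded pieces S_lam = range (proj lam); mult is the product, one the unit.\<close>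

definition Spc :: "(IS list \<Rightarrow> 'v \<Rightarrow> 'v) \<Rightarrow> IS list \<Rightarrow> 'v set" where
  "Spc proj lam = range (proj lam)"

definition framed_algebra ::
  "nat \<Rightarrow> nat \<Rightarrow> (complex \<Rightarrow> 'v::ab_group_add \<Rightarrow> 'v) \<Rightarrow> (IS list \<Rightarrow> 'v \<Rightarrow> 'v)
     \<Rightarrow> ('v \<Rightarrow> 'v \<Rightarrow> 'v) \<Rightarrow> 'v \<Rightarrow> bool" where
  "framed_algebra l r sc proj mult one \<longleftrightarrow>
     \<comment> \<open>finite-dimensional complex vector space\<close>
     (\<exists>B. finite_dimensional_vector_space sc B) \<and>
     \<comment> \<open>grading as an internal direct sum indexed by IS^(l,r)\<close>
     (\<forall>lam. Vector_Spaces.linear sc sc (proj lam)) \<and>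
     (\<forall>lam mu x. proj lam (proj mu x) = (if lam = mu then proj mu x else 0)) \<and>
     (\<forall>lam x. lam \<notin> grades l r \<longrightarrow> proj lam x = 0) \<and>
     (\<forall>x. x = (\<Sum>lam\<in>grades l r. proj lam x)) \<and>
     \<comment> \<open>bilinear product\<close>
     (\<forall>a. Vector_Spaces.linear sc sc (mult a)) \<and>
     (\<forall>b. Vector_Spaces.linear sc sc (\<lambda>a. mult a b)) \<and>
     \<comment> \<open>nonzero unit in S_0\<close>
     one \<noteq> 0 \<and> one \<in> Spc proj (zero_grade l r) \<and>
     \<comment> \<open>(FA1)\<close>
     (\<forall>lam \<in> grades l r. sgrade l r lam \<notin> \<int> \<longrightarrow> Spc proj lam = {0}) \<and>
     \<comment> \<open>(FA2)\<close>
     Spc proj (zero_grade l r) = range (\<lambda>c. sc c one) \<and>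
     (\<forall>x. mult one x = x \<and> mult x one = x) \<and>
     \<comment> \<open>(FA3)\<close>
     (\<forall>l1\<in>grades l r. \<forall>l2\<in>grades l r. \<forall>a\<in>Spc proj l1. \<forall>b\<in>Spc proj l2.
        \<forall>lam. lam \<notin> fusL l1 l2 \<longrightarrow> proj lam (mult a b) = 0) \<and>
     \<comment> \<open>(FA4)\<close>
     (\<forall>l0\<in>grades l r. \<forall>l1\<in>grades l r. \<forall>l2\<in>grades l r. \<forall>l3\<in>grades l r.
      \<forall>a1\<in>Spc proj l1. \<forall>a2\<in>Spc proj l2. \<forall>a3\<in>Spc proj l3.
      \<forall>lam'\<in>AsetL l0 l2 l1 l3.
        proj l0 (mult a2 (proj lam' (mult a1 a3))) =
        (\<Sum>lam\<in>AsetL l0 l1 l2 l3.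
            sc (BmatL l r lam lam' l0 l1 l2 l3) (proj l0 (mult a1 (proj lam (mult a2 a3))))))"

definition graded_subspace :: "(complex \<Rightarrow> 'v::ab_group_add \<Rightarrow> 'v) \<Rightarrow> (IS list \<Rightarrow> 'v \<Rightarrow> 'v) \<Rightarrow> 'v set \<Rightarrow> bool" where
  "graded_subspace sc proj M \<longleftrightarrow> module.subspace sc M \<and> (\<forall>x\<in>M. \<forall>lam. proj lam x \<in> M)"

definition fa_ideal :: "(complex \<Rightarrow> 'v::ab_group_add \<Rightarrow> 'v) \<Rightarrow> (IS list \<Rightarrow> 'v \<Rightarrow> 'v) \<Rightarrow> ('v \<Rightarrow> 'v \<Rightarrow> 'v) \<Rightarrow> 'v set \<Rightarrow> bool" where
  "fa_ideal sc proj mult M \<longleftrightarrow> graded_subspace sc proj M \<and> (\<forall>a x. x \<in> M \<longrightarrow> mult a x \<in> M)"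

definition simple_framed_algebra ::
  "nat \<Rightarrow> nat \<Rightarrow> (complex \<Rightarrow> 'v::ab_group_add \<Rightarrow> 'v) \<Rightarrow> (IS list \<Rightarrow> 'v \<Rightarrow> 'v)
     \<Rightarrow> ('v \<Rightarrow> 'v \<Rightarrow> 'v) \<Rightarrow> 'v \<Rightarrow> bool" where
  "simple_framed_algebra l r sc proj mult one \<longleftrightarrow>
     framed_algebra l r sc proj mult one \<and>
     (\<forall>M. fa_ideal sc proj mult M \<longrightarrow> M = {0} \<or> M = UNIV)"

text \<open>0 = (0,0), 1/2 = (0,1), 1/16 = (1,0); dpart gives the d-coordinate.\<close>
definition dpart :: "IS \<Rightarrow> bool" where
  "dpart h = (h = ISsixteenth)"

definition dvec :: "IS list \<Rightarrow> bool list" where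
  "dvec lam = map dpart lam"

definition AS :: "(IS list \<Rightarrow> 'v::zero \<Rightarrow> 'v) \<Rightarrow> bool list \<Rightarrow> 'v set" where
  "AS proj d = {x. \<forall>lam. dvec lam \<noteq> d \<longrightarrow> proj lam x = 0}"

definition DS :: "nat \<Rightarrow> nat \<Rightarrow> (IS list \<Rightarrow> 'v::zero \<Rightarrow> 'v) \<Rightarrow> bool list set" where
  "DS l r proj = {d. length d = l + r \<and> AS proj d \<noteq> {0}}"

end

theory Submission
  imports Defs
begin

text \<open>Let \<open>R\<close> be the span of the homogeneous components of the products \<open>n \<cdot> a\<close> with
  \<open>n \<in> N\<close>. The braiding relation (FA4) rewrites a left product \<open>b \<cdot> (n \<cdot> a)\<close> as a combination
  of components of \<open>n \<cdot> (b \<cdot> a)\<close>, so \<open>R\<close> is an ideal; it contains \<open>N\<close>, hence \<open>R = S\<close> when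
  \<open>N \<noteq> 0\<close>. Thus \<open>A\<^sub>S(d)\<close> is spanned by the components of degree \<open>(d, c)\<close> of products
  \<open>n \<cdot> a\<close> with \<open>n\<close> homogeneous of \<open>d\<close>-part \<open>d\<close>. Since \<open>d\<close>-parts add in \<open>\<int>\<^sub>2\<close> under fusion,
  only the part of \<open>a\<close> in \<open>A\<^sub>S(0)\<close> contributes, and FA4 with \<open>a\<^sub>3 = 1\<close> makes such a
  component a multiple of the corresponding component of \<open>a \<cdot> n \<in> N\<close>.\<close>

lemma UNIV_IS: "(UNIV :: IS set) = {IS0, IShalf, ISsixteenth}"
  using IS.exhaust by auto

lemma finite_grades: "finite (grades l r)"
proof -
  have "finite (UNIV :: IS set)" by (simp add: UNIV_IS)
  then show ?thesis
    using finite_lists_length_eq[of "UNIV :: IS set" "l + r"] by (simp add: grades_def)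
qed

lemma fus_IS0_right [simp]: "fus h IS0 = {h}"
  by (cases h) auto

lemma dpart_fus: "z \<in> fus x y \<Longrightarrow> dpart z \<longleftrightarrow> dpart x \<noteq> dpart y"
  by (cases x; cases y) (auto simp: dpart_def)

lemma dvec_fusL_cancel:
  assumes "z \<in> fusL x y" and "dvec z = dvec x"
  shows "dvec y = replicate (length y) False"
proof (rule nth_equalityI)
  fix i assume "i < length (dvec y)"
  with assms have "z ! i \<in> fus (x ! i) (y ! i)" and "dpart (z ! i) = dpart (x ! i)"
    unfolding fusL_def dvec_def by (auto dest: arg_cong[where f = "\<lambda>xs. xs ! i"])
  then show "dvec y ! i = replicate (length y) False ! i"
    using \<open>i < length (dvec y)\<close> by (auto simp: dvec_def dest: dpart_fus)
qed (simp add: dvec_def)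

lemma AsetL_iff_fusL:
  assumes "length x1 = length x0" "length x2 = length x0" "length x3 = length x0"
  shows "z \<in> AsetL x0 x1 x2 x3 \<longleftrightarrow> z \<in> fusL x2 x3 \<and> x0 \<in> fusL x1 z"
  using assms unfolding AsetL_def fusL_def Aset_def by auto

lemma linear_compose_fun:
  "Vector_Spaces.linear s1 s2 f \<Longrightarrow> Vector_Spaces.linear s2 s3 g \<Longrightarrow>
    Vector_Spaces.linear s1 s3 (\<lambda>x. g (f x))"
  using Vector_Spaces.linear_compose[of s1 s2 f s3 g] by (simp add: o_def)

locale framed_alg =
  fixes l r :: nat and sc :: "complex \<Rightarrow> 'v::ab_group_add \<Rightarrow> 'v"
    and proj :: "IS list \<Rightarrow> 'v \<Rightarrow> 'v" and mult :: "'v \<Rightarrow> 'v \<Rightarrow> 'v" and one :: 'v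
  assumes framed: "framed_algebra l r sc proj mult one"
begin

sublocale vector_space sc
  using framed unfolding framed_algebra_def finite_dimensional_vector_space_def by blast

sublocale pair: vector_space_pair sc sc ..

lemma linear_proj: "Vector_Spaces.linear sc sc (proj lam)"
  and proj_proj: "proj lam (proj mu x) = (if lam = mu then proj mu x else 0)"
  and proj_outside_grades: "lam \<notin> grades l r \<Longrightarrow> proj lam x = 0"
  and sum_proj: "(\<Sum>lam\<in>grades l r. proj lam x) = x"
  and linear_left_mult: "Vector_Spaces.linear sc sc (mult a)"
  and linear_right_mult: "Vector_Spaces.linear sc sc (\<lambda>x. mult x b)"
  and one_in_Spc: "one \<in> Spc proj (zero_grade l r)"
  and mult_one: "mult one x = x" "mult x one = x"
  using framed unfolding framed_algebra_def by metis+

lemma proj_mult_outside_fusL: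
  "l1 \<in> grades l r \<Longrightarrow> l2 \<in> grades l r \<Longrightarrow> a \<in> Spc proj l1 \<Longrightarrow> b \<in> Spc proj l2 \<Longrightarrow>
    lam \<notin> fusL l1 l2 \<Longrightarrow> proj lam (mult a b) = 0"
  using framed unfolding framed_algebra_def by blast

lemma braiding:
  "l0 \<in> grades l r \<Longrightarrow> l1 \<in> grades l r \<Longrightarrow> l2 \<in> grades l r \<Longrightarrow> l3 \<in> grades l r \<Longrightarrow>
    a1 \<in> Spc proj l1 \<Longrightarrow> a2 \<in> Spc proj l2 \<Longrightarrow> a3 \<in> Spc proj l3 \<Longrightarrow> lam' \<in> AsetL l0 l2 l1 l3 \<Longrightarrow>
    proj l0 (mult a2 (proj lam' (mult a1 a3))) =
      (\<Sum>lam\<in>AsetL l0 l1 l2 l3.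
         sc (BmatL l r lam lam' l0 l1 l2 l3) (proj l0 (mult a1 (proj lam (mult a2 a3)))))"
  using framed unfolding framed_algebra_def by blast

lemma proj_0 [simp]: "proj lam 0 = 0"
  using pair.linear_0[OF linear_proj] .

lemma mult_0_right [simp]: "mult a 0 = 0"
  using pair.linear_0[OF linear_left_mult] .

lemma mult_0_left [simp]: "mult 0 b = 0"
  using pair.linear_0[OF linear_right_mult] by simp

lemma proj_in_Spc: "proj lam x \<in> Spc proj lam"
  unfolding Spc_def by simp

lemma proj_Spc: "a \<in> Spc proj lam \<Longrightarrow> proj lam a = a"
  unfolding Spc_def using proj_proj by auto

lemma zero_grade_in_grades: "zero_grade l r \<in> grades l r"
  unfolding zero_grade_def grades_def by simp

lemma length_grades: "lam \<in> grades l r \<Longrightarrow> length lam = l + r"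
  unfolding grades_def by simp

lemma linear_in_subspace_by_components:
  assumes "subspace M" and "Vector_Spaces.linear sc sc f"
    and "\<And>lam. lam \<in> grades l r \<Longrightarrow> f (proj lam x) \<in> M"
  shows "f x \<in> M"
proof -
  have "f x = f (\<Sum>lam\<in>grades l r. proj lam x)"
    by (simp only: sum_proj)
  also have "\<dots> = (\<Sum>lam\<in>grades l r. f (proj lam x))"
    by (rule pair.linear_sum[OF assms(2)])
  also have "\<dots> \<in> M"
    by (rule subspace_sum[OF assms(1) assms(3)])
  finally show ?thesis .
qed

lemma in_subspace_by_components:
  "subspace M \<Longrightarrow> (\<And>lam. lam \<in> grades l r \<Longrightarrow> proj lam x \<in> M) \<Longrightarrow> x \<in> M"
  using linear_in_subspace_by_components[of M "\<lambda>x. x", OF _ linear_ident] .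

lemma bilinear_in_subspace_by_components:
  assumes M: "subspace M"
    and lin: "\<And>y. Vector_Spaces.linear sc sc (\<lambda>x. g x y)" "\<And>x. Vector_Spaces.linear sc sc (g x)"
    and hom: "\<And>l1 l2. l1 \<in> grades l r \<Longrightarrow> l2 \<in> grades l r \<Longrightarrow> g (proj l1 x) (proj l2 y) \<in> M"
  shows "g x y \<in> M"
  by (rule linear_in_subspace_by_components[OF M lin(1)],
      rule linear_in_subspace_by_components[OF M lin(2)], rule hom)

text \<open>FA4 with \<open>a\<^sub>3 = 1\<close>: the only intermediate degree is that of \<open>n\<close>.\<close>
lemma proj_mult_swap_in_span:
  assumes g: "l0 \<in> grades l r" "l1 \<in> grades l r" "l2 \<in> grades l r"
    and a: "a \<in> Spc proj l1" and n: "n \<in> Spc proj l2"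
  shows "proj l0 (mult n a) \<in> span {proj l0 (mult a n)}"
proof (cases "l0 \<in> fusL l2 l1")
  case False
  then show ?thesis using proj_mult_outside_fusL[OF g(3,2) n a] span_zero by simp
next
  case True
  have "l1 \<in> AsetL l0 l2 l1 (zero_grade l r)"
    using True g by (auto simp: AsetL_iff_fusL length_grades zero_grade_def fusL_def)
  have "proj l0 (mult n a) = proj l0 (mult n (proj l1 (mult a one)))"
    using proj_Spc[OF a] by (simp add: mult_one)
  also have "\<dots> = (\<Sum>lam\<in>AsetL l0 l1 l2 (zero_grade l r).
      sc (BmatL l r lam l1 l0 l1 l2 (zero_grade l r)) (proj l0 (mult a (proj lam (mult n one)))))"
    by (rule braiding[OF g zero_grade_in_grades a n one_in_Spc \<open>l1 \<in> AsetL _ _ _ _\<close>])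
  also have "\<dots> \<in> span {proj l0 (mult a n)}"
  proof (intro span_sum span_scale)
    fix lam
    have "proj lam n = (if lam = l2 then n else 0)"
      using proj_proj[of lam l2 n] by (simp add: proj_Spc[OF n])
    then show "proj l0 (mult a (proj lam (mult n one))) \<in> span {proj l0 (mult a n)}"
      by (simp add: mult_one span_base span_zero)
  qed
  finally show ?thesis .
qed

lemma proj_mult_proj_mult_in_span:
  assumes g: "l0 \<in> grades l r" "l1 \<in> grades l r" "l2 \<in> grades l r" "l3 \<in> grades l r"
    and n: "n \<in> Spc proj l1" and b: "b \<in> Spc proj l2" and a: "a \<in> Spc proj l3"
  shows "proj l0 (mult b (proj mu (mult n a))) \<in> span (range (\<lambda>c. proj l0 (mult n c)))"
proof (cases "mu \<in> grades l r")
  case False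
  then show ?thesis using proj_outside_grades span_zero by simp
next
  case mu: True
  consider "mu \<in> AsetL l0 l2 l1 l3" | "mu \<notin> fusL l1 l3" | "l0 \<notin> fusL l2 mu"
    using mu g by (auto simp: AsetL_iff_fusL length_grades)
  then show ?thesis
  proof cases
    case 1
    then show ?thesis
      unfolding braiding[OF g n b a 1] by (intro span_sum span_scale span_base) simp
  next
    case 2
    then show ?thesis using proj_mult_outside_fusL[OF g(2,4) n a] span_zero by simp
  next
    case 3
    then show ?thesis using proj_mult_outside_fusL[OF g(3) mu b proj_in_Spc] span_zero by simp
  qed
qed

lemma graded_subspaceD:
  assumes "graded_subspace sc proj N"
  shows "subspace N" and "x \<in> N \<Longrightarrow> proj lam x \<in> N"
  using assms unfolding graded_subspace_def by auto

definition right_mult_components :: "'v set \<Rightarrow> 'v set" where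
  "right_mult_components N = {proj mu (mult n a) | mu n a. n \<in> N}"

lemma subset_span_right_mult_components: "N \<subseteq> span (right_mult_components N)"
proof
  fix n assume n: "n \<in> N"
  have "mult n one \<in> span (right_mult_components N)"
  proof (rule in_subspace_by_components[OF subspace_span])
    show "proj lam (mult n one) \<in> span (right_mult_components N)" for lam
      using n by (auto simp: right_mult_components_def intro: span_base)
  qed
  then show "n \<in> span (right_mult_components N)" by (simp add: mult_one)
qed

lemma left_mult_right_mult_component_in_span:
  assumes N: "graded_subspace sc proj N" and n: "n \<in> N"
  shows "mult b (proj mu (mult n a)) \<in> span (right_mult_components N)"
proof (rule in_subspace_by_components[OF subspace_span])
  fix l0 assume l0: "l0 \<in> grades l r"
  show "proj l0 (mult b (proj mu (mult n a))) \<in> span (right_mult_components N)"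
  proof (rule linear_in_subspace_by_components[OF subspace_span,
        where f = "\<lambda>n. proj l0 (mult b (proj mu (mult n a)))" and x = n])
    show "Vector_Spaces.linear sc sc (\<lambda>n. proj l0 (mult b (proj mu (mult n a))))"
      by (rule linear_compose_fun[OF linear_compose_fun[OF linear_compose_fun[OF
          linear_right_mult linear_proj] linear_left_mult] linear_proj])
    fix l1 assume l1: "l1 \<in> grades l r"
    let ?n = "proj l1 n"
    have "range (\<lambda>c. proj l0 (mult ?n c)) \<subseteq> right_mult_components N"
      using graded_subspaceD(2)[OF N n] by (auto simp: right_mult_components_def)
    then have hom: "proj l0 (mult (proj l2 b) (proj mu (mult ?n (proj l3 a))))
        \<in> span (right_mult_components N)" if "l2 \<in> grades l r" "l3 \<in> grades l r" for l2 l3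
      using proj_mult_proj_mult_in_span[OF l0 l1 that proj_in_Spc proj_in_Spc proj_in_Spc]
      by (meson span_mono subsetD)
    show "proj l0 (mult b (proj mu (mult ?n a))) \<in> span (right_mult_components N)"
    proof (rule bilinear_in_subspace_by_components[OF subspace_span,
          where g = "\<lambda>b a. proj l0 (mult b (proj mu (mult ?n a)))"])
      show "Vector_Spaces.linear sc sc (\<lambda>b. proj l0 (mult b (proj mu (mult ?n a))))" for a
        by (rule linear_compose_fun[OF linear_right_mult linear_proj])
      show "Vector_Spaces.linear sc sc (\<lambda>a. proj l0 (mult b (proj mu (mult ?n a))))" for b
        by (rule linear_compose_fun[OF linear_compose_fun[OF linear_compose_fun[OF
            linear_left_mult linear_proj] linear_left_mult] linear_proj])
    qed (rule hom)
  qed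
qed

lemma fa_ideal_span_right_mult_components:
  assumes N: "graded_subspace sc proj N"
  shows "fa_ideal sc proj mult (span (right_mult_components N))"
  unfolding fa_ideal_def graded_subspace_def
proof (intro conjI allI ballI impI subspace_span)
  fix x lam assume "x \<in> span (right_mult_components N)"
  then show "proj lam x \<in> span (right_mult_components N)"
  proof (induct rule: span_induct)
    case (step y)
    then obtain mu n a where "y = proj mu (mult n a)"
      unfolding right_mult_components_def by blast
    then show ?case
      using span_base[OF step] by (simp add: proj_proj span_zero)
  qed (rule pair.linear_subspace_linear_preimage[OF linear_proj subspace_span])
next
  fix a x assume "x \<in> span (right_mult_components N)"
  then show "mult a x \<in> span (right_mult_components N)"
  proof (induct rule: span_induct)
    case (step y)
    then show ?case
      using left_mult_right_mult_component_in_span[OF N]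
      by (auto simp: right_mult_components_def)
  qed (rule pair.linear_subspace_linear_preimage[OF linear_left_mult subspace_span])
qed

lemma proj_right_mult_in_A0_submodule:
  assumes N: "graded_subspace sc proj N" and NA: "N \<subseteq> AS proj d"
    and A0: "\<forall>a\<in>AS proj (replicate (l + r) False). \<forall>n\<in>N. mult a n \<in> N"
    and n: "n \<in> N" and mu: "dvec mu = d"
  shows "proj mu (mult n a) \<in> N"
proof (cases "mu \<in> grades l r")
  case False
  then show ?thesis using proj_outside_grades subspace_0 graded_subspaceD(1)[OF N] by simp
next
  case muG: True
  show ?thesis
  proof (rule bilinear_in_subspace_by_components[OF graded_subspaceD(1)[OF N],
        where g = "\<lambda>n a. proj mu (mult n a)"])
    show "Vector_Spaces.linear sc sc (\<lambda>n. proj mu (mult n a))" for a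
      by (rule linear_compose_fun[OF linear_right_mult linear_proj])
    show "Vector_Spaces.linear sc sc (\<lambda>a. proj mu (mult n a))" for n
      by (rule linear_compose_fun[OF linear_left_mult linear_proj])
    fix ka nu assume kaG: "ka \<in> grades l r" and nuG: "nu \<in> grades l r"
    have nka: "proj ka n \<in> N" using graded_subspaceD(2)[OF N n] .
    show "proj mu (mult (proj ka n) (proj nu a)) \<in> N"
    proof (cases "proj ka n \<noteq> 0 \<and> mu \<in> fusL ka nu")
      case True
      have "proj ka (proj ka n) = 0" if "dvec ka \<noteq> d"
        using NA nka that unfolding AS_def by blast
      then have "dvec ka = d" using True by (auto simp: proj_proj)
      then have "dvec nu = replicate (l + r) False"
        using dvec_fusL_cancel[of mu ka nu] True mu nuG by (simp add: length_grades)
      then have "proj nu a \<in> AS proj (replicate (l + r) False)"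
        unfolding AS_def using proj_proj by auto
      with A0 nka have "proj mu (mult (proj nu a) (proj ka n)) \<in> N"
        using graded_subspaceD(2)[OF N] by blast
      then show ?thesis
        using proj_mult_swap_in_span[OF muG nuG kaG proj_in_Spc proj_in_Spc]
          span_minimal[of _ N] graded_subspaceD(1)[OF N] by blast
    next
      case False
      then show ?thesis
        using proj_mult_outside_fusL[OF kaG nuG proj_in_Spc proj_in_Spc]
          subspace_0[OF graded_subspaceD(1)[OF N]] by auto
    qed
  qed
qed

definition dproj :: "bool list \<Rightarrow> 'v \<Rightarrow> 'v" where
  "dproj d x = (\<Sum>lam\<in>{lam \<in> grades l r. dvec lam = d}. proj lam x)"

lemma linear_dproj: "Vector_Spaces.linear sc sc (dproj d)"
  unfolding dproj_def by (rule pair.linear_compose_sum) (simp add: linear_proj)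

lemma dproj_proj: "dproj d (proj mu x) = (if dvec mu = d then proj mu x else 0)"
proof -
  have "dproj d (proj mu x) = (\<Sum>lam\<in>{lam \<in> grades l r. dvec lam = d}.
      if lam = mu then proj mu x else 0)"
    unfolding dproj_def by (simp add: proj_proj)
  then show ?thesis
    using finite_grades proj_outside_grades by auto
qed

lemma dproj_AS: "x \<in> AS proj d \<Longrightarrow> dproj d x = x"
  unfolding dproj_def AS_def
  by (subst (2) sum_proj[symmetric], rule sum.mono_neutral_left[OF finite_grades]) auto

lemma AS_subset_A0_submodule:
  assumes N: "graded_subspace sc proj N" and NA: "N \<subseteq> AS proj d"
    and A0: "\<forall>a\<in>AS proj (replicate (l + r) False). \<forall>n\<in>N. mult a n \<in> N"
    and generating: "span (right_mult_components N) = UNIV"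
  shows "AS proj d \<subseteq> N"
proof
  have "right_mult_components N \<subseteq> dproj d -` N"
    using proj_right_mult_in_A0_submodule[OF N NA A0] subspace_0[OF graded_subspaceD(1)[OF N]]
    by (auto simp: right_mult_components_def dproj_proj)
  then have "span (right_mult_components N) \<subseteq> dproj d -` N"
    by (intro span_minimal pair.linear_subspace_vimage[OF linear_dproj graded_subspaceD(1)[OF N]])
  fix x assume "x \<in> AS proj d"
  moreover have "dproj d x \<in> N"
    using \<open>span (right_mult_components N) \<subseteq> dproj d -` N\<close> generating by blast
  ultimately show "x \<in> N" by (simp add: dproj_AS)
qed

end

theorem mainTheorem9:
  fixes l r :: nat
    and sc :: "complex \<Rightarrow> 'v::ab_group_add \<Rightarrow> 'v"
    and proj :: "IS list \<Rightarrow> 'v \<Rightarrow> 'v"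
    and mult :: "'v \<Rightarrow> 'v \<Rightarrow> 'v"
    and one :: 'v
    and d :: "bool list"
    and N :: "'v set"
  assumes "simple_framed_algebra l r sc proj mult one"
    and "d \<in> DS l r proj"
    and "graded_subspace sc proj N"
    and "N \<subseteq> AS proj d"
    and "\<forall>a\<in>AS proj (replicate (l + r) False). \<forall>n\<in>N. mult a n \<in> N"
  shows "N = {0} \<or> N = AS proj d"
proof (cases "N = {0}")
  case False
  interpret framed_alg l r sc proj mult one
    using assms(1) by unfold_locales (simp add: simple_framed_algebra_def)
  have "span (right_mult_components N) \<noteq> {0}"
    using False subset_span_right_mult_components subspace_0[OF graded_subspaceD(1)[OF assms(3)]]
    by blast
  then have "span (right_mult_components N) = UNIV"
    using assms(1) fa_ideal_span_right_mult_components[OF assms(3)]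
    unfolding simple_framed_algebra_def by blast
  then have "AS proj d \<subseteq> N"
    using AS_subset_A0_submodule assms(3-5) by blast
  with assms(4) show ?thesis by blast
qed simp

end
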